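(* Let $G\subset E'$ be a separating linear subspace, let $(T^{E}_{m},T^{\mathbb{K}}_{m})_{m\in\mathcal{M}}$ be a strong, consistent family for $(\mathcal{FV},E)$, and let $U$ be a set of uniqueness for $\mathcal{FV}(\Omega)$. Then the restriction map \[ R_{U,G}\colon S(\mathcal{FV}(\Omega)\varepsilon E)\to \mathcal{FV}_{G}(U,E),\quad f\mapsto (T^{E}_{m}(f)(x))_{(m,x)\in U}, \] is injective.
   Context: $\mathbb{K}\in\{\mathbb{R},\mathbb{C}\}$; $E$ is a non-trivial locally convex Hausdorff space (lcHs) over $\mathbb{K}$ with a directed fundamental system of seminorms $(p_\alpha)_{\alpha\in\mathfrak{A}}$ (for $E=\mathbb{K}$ the system is $\{|\cdot|\}$); $E'$ is its topological dual. A linear subspace $G\subset E'$ is separating if $e'(x)=0$ for all $e'\in G$ implies $x=0$. Weighted function spaces: Let $\Omega,J,L$ be non-empty sets, $(M_l)_{l\in L}$ non-empty sets and $\mathcal{V}=((\nu_{j,l,m})_{m\in M_l})_{j\in J,l\in L}$ functions $\nu_{j,l,m}\colon\Omega\to[0,\infty)$ such that for all $x\in\Omega$, $l\in L$ there is $j\in J$ with $\nu_{j,l,m}(x)>0$ for all $m\in M_l$. Let $\mathcal{M}_{\mathrm{top}}:=\bigcup_{l}M_l$ and $\mathcal{M}_0,\mathcal{M}_r$ sets such that the three are pairwise disjoint; $\mathcal{M}:=\mathcal{M}_{\mathrm{top}}\cup\mathcal{M}_0\cup\mathcal{M}_r$. Let $(\omega_m)_{m\in\mathcal{M}}$ be non-empty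 sets with $\Omega\subset\omega_m$ for $m\in\mathcal{M}_{\mathrm{top}}$. For $F\in\{E,\mathbb{K}\}$ let $T^{F}_m\colon \operatorname{dom}T^F_m\subset F^\Omega\to F^{\omega_m}$ be linear maps, $m\in\mathcal{M}$. Put $W(\Omega,F):=\bigcap_{m\in\mathcal{M}}\operatorname{dom}T^F_m\cap\bigcap_{m\in\mathcal{M}_0}\ker T^F_m$ and $\mathcal{FV}(\Omega,F):=\{f\in W(\Omega,F): |f|_{j,l,\alpha}<\infty\ \forall j\in J,l\in L,\alpha\}$ where $|f|_{j,l,\alpha}:=\sup_{x\in\Omega,m\in M_l}p_\alpha(T^F_m(f)(x))\nu_{j,l,m}(x)$, topologised by these seminorms; $\mathcal{FV}(\Omega):=\mathcal{FV}(\Omega,\mathbb{K})$ with seminorms $|f|_{j,l}$. Write $T^F_{m,x}(f):=T^F_m(f)(x)$. Such a space is a dom-space if its system of seminorms is directed and, in the scalar case, all point evaluations $\delta_x\colon f\mapsto f(x)$, $x\in\Omega$, are continuous on $\mathcal{FV}(\Omega)$. $\mathcal{FV}(\Omega)\varepsilon E$ is the space of continuous linear maps $\mathcal{FV}(\Omega)'_\kappa\to E$ ($\kappa$: topology of uniform convergence on absolutely convex compact subsets of $\mathcal{FV}(\Omega)$) with the topology of uniform convergence on equicontinuous sets; $S\colon \mathcal{FV}(\Omega)\varepsilon E\to E^\Omega$, $S(u)(x):=u(\delta_x)$. If $\mathcal{FV}(\Omega)$ and $\mathcal{FV}(\Omega,E)$ are dom-spaces built with the same data $\Omega,\mathcal{V},\mathcal{M}_{\mathrm{top}},\mathcal{M}_0,\mathcal{M}_r,(\omega_m)$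 and operators $T^{\mathbb{K}}_m$ resp. $T^E_m$, then $(T^E_m,T^{\mathbb{K}}_m)_{m\in\mathcal{M}}$ is a defining family for $(\mathcal{FV},E)$. It is consistent if for all $u\in\mathcal{FV}(\Omega)\varepsilon E$, $m\in\mathcal{M}$, $x\in\omega_m$: $S(u)\in\operatorname{dom}T^E_m$, the restriction of $T^{\mathbb{K}}_{m,x}$ to $\mathcal{FV}(\Omega)$ lies in $\mathcal{FV}(\Omega)'$, and $T^E_m(S(u))(x)=u(T^{\mathbb{K}}_{m,x})$. It is strong if for all $e'\in E'$, $f\in\mathcal{FV}(\Omega,E)$, $m\in\mathcal{M}$: $e'\circ f\in\operatorname{dom}T^{\mathbb{K}}_m$ and $T^{\mathbb{K}}_m(e'\circ f)=e'\circ T^E_m(f)$ on $\omega_m$. A set $U\subset\bigcup_{m\in\mathcal{M}}\{m\}\times\omega_m$ is a set of uniqueness for $\mathcal{FV}(\Omega)$ if $T^{\mathbb{K}}_{m,x}\in\mathcal{FV}(\Omega)'$ for all $(m,x)\in U$ and every $f\in\mathcal{FV}(\Omega)$ with $T^{\mathbb{K}}_m(f)(x)=0$ for all $(m,x)\in U$ is $0$. For separating $G\subset E'$, $\mathcal{FV}_G(U,E)$ is the set of $f\colon U\to E$ such that for every $e'\in G$ there is (a necessarily unique) $f_{e'}\in\mathcal{FV}(\Omega)$ with $T^{\mathbb{K}}_m(f_{e'})(x)=e'(f(m,x))$ for all $(m,x)\in U$. For strong consistent families the map $R_{U,G}$ in the claim takes values in $\mathcal{FV}_G(U,E)$. *)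

theory Defs
  imports "HOL-Analysis.Analysis" "HOL-Library.Function_Algebras"
begin

definition semtop :: "('i \<Rightarrow> 'v::ab_group_add \<Rightarrow> real) \<Rightarrow> 'i set \<Rightarrow> 'v set \<Rightarrow> 'v topology" where
  "semtop q I X = topology (\<lambda>S. S \<subseteq> X \<and> (\<forall>x\<in>S. \<exists>F e. finite F \<and> F \<subseteq> I \<and> 0 < e \<and>
       {y\<in>X. \<forall>i\<in>F. q i (y - x) < e} \<subseteq> S))"

lemma istopology_semtop:
  "istopology (\<lambda>S. S \<subseteq> X \<and> (\<forall>x\<in>S. \<exists>F e. finite F \<and> F \<subseteq> I \<and> 0 < (e::real) \<and>
       {y\<in>X. \<forall>i\<in>F. q i (y - x) < e} \<subseteq> S))"
  unfolding istopology_def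
proof (rule conjI; intro allI impI)
  fix S T
  assume S: "S \<subseteq> X \<and> (\<forall>x\<in>S. \<exists>F e. finite F \<and> F \<subseteq> I \<and> 0 < e \<and> {y\<in>X. \<forall>i\<in>F. q i (y - x) < e} \<subseteq> S)"
     and T: "T \<subseteq> X \<and> (\<forall>x\<in>T. \<exists>F e. finite F \<and> F \<subseteq> I \<and> 0 < e \<and> {y\<in>X. \<forall>i\<in>F. q i (y - x) < e} \<subseteq> T)"
  show "S \<inter> T \<subseteq> X \<and> (\<forall>x\<in>S \<inter> T. \<exists>F e. finite F \<and> F \<subseteq> I \<and> 0 < e \<and> {y\<in>X. \<forall>i\<in>F. q i (y - x) < e} \<subseteq> S \<inter> T)"
  proof (intro conjI ballI)
    show "S \<inter> T \<subseteq> X" using S by blast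
  next
    fix x assume x: "x \<in> S \<inter> T"
    obtain F1 e1 where 1: "finite F1" "F1 \<subseteq> I" "0 < e1" "{y\<in>X. \<forall>i\<in>F1. q i (y - x) < e1} \<subseteq> S"
      using S x by blast
    obtain F2 e2 where 2: "finite F2" "F2 \<subseteq> I" "0 < e2" "{y\<in>X. \<forall>i\<in>F2. q i (y - x) < e2} \<subseteq> T"
      using T x by blast
    have "{y\<in>X. \<forall>i\<in>F1 \<union> F2. q i (y - x) < min e1 e2} \<subseteq> S \<inter> T"
      using 1(4) 2(4) by auto
    then show "\<exists>F e. finite F \<and> F \<subseteq> I \<and> 0 < e \<and> {y\<in>X. \<forall>i\<in>F. q i (y - x) < e} \<subseteq> S \<inter> T"
      using 1 2 by (intro exI[of _ "F1 \<union> F2"] exI[of _ "min e1 e2"]) auto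
  qed
next
  fix K :: "'a set set"
  assume K: "\<forall>S\<in>K. S \<subseteq> X \<and> (\<forall>x\<in>S. \<exists>F e. finite F \<and> F \<subseteq> I \<and> 0 < e \<and> {y\<in>X. \<forall>i\<in>F. q i (y - x) < e} \<subseteq> S)"
  show "\<Union>K \<subseteq> X \<and> (\<forall>x\<in>\<Union>K. \<exists>F e. finite F \<and> F \<subseteq> I \<and> 0 < e \<and> {y\<in>X. \<forall>i\<in>F. q i (y - x) < e} \<subseteq> \<Union>K)"
  proof (intro conjI ballI)
    show "\<Union>K \<subseteq> X" using K by blast
  next
    fix x assume "x \<in> \<Union>K"
    then obtain S where "S \<in> K" "x \<in> S" by blast
    have H: "\<exists>F e. finite F \<and> F \<subseteq> I \<and> 0 < e \<and> {y\<in>X. \<forall>i\<in>F. q i (y - x) < e} \<subseteq> S"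
      by (rule bspec[OF conjunct2[OF bspec[OF K \<open>S \<in> K\<close>]] \<open>x \<in> S\<close>])
    then obtain F e where FE: "finite F" "F \<subseteq> I" "0 < e" "{y\<in>X. \<forall>i\<in>F. q i (y - x) < e} \<subseteq> S"
      by (elim exE conjE)
    have "{y\<in>X. \<forall>i\<in>F. q i (y - x) < e} \<subseteq> \<Union>K" using FE(4) \<open>S \<in> K\<close> by (rule subset_trans[OF _ Union_upper])
    then show "\<exists>F e. finite F \<and> F \<subseteq> I \<and> 0 < e \<and> {y\<in>X. \<forall>i\<in>F. q i (y - x) < e} \<subseteq> \<Union>K"
      using FE(1-3) by blast
  qed
qed

definition is_seminorm :: "('k::real_normed_field \<Rightarrow> 'v \<Rightarrow> 'v) \<Rightarrow> ('v::ab_group_add \<Rightarrow> real) \<Rightarrow> bool" where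
  "is_seminorm sc q \<longleftrightarrow> (\<forall>x. 0 \<le> q x) \<and> (\<forall>c x. q (sc c x) = norm c * q x) \<and> (\<forall>x y. q (x + y) \<le> q x + q y)"

definition directed_on :: "('i \<Rightarrow> 'v \<Rightarrow> real) \<Rightarrow> 'i set \<Rightarrow> 'v set \<Rightarrow> bool" where
  "directed_on q I X \<longleftrightarrow> (\<forall>i1\<in>I. \<forall>i2\<in>I. \<exists>i3\<in>I. \<exists>C>0. \<forall>x\<in>X. q i1 x \<le> C * q i3 x \<and> q i2 x \<le> C * q i3 x)"

text \<open>Non-trivial locally convex Hausdorff space E (carrier: the whole type 'e) over the scalar
  field 'k, with the directed fundamental system of seminorms p a, a in A.\<close>
definition lcHs :: "('k::real_normed_field \<Rightarrow> 'e::ab_group_add \<Rightarrow> 'e) \<Rightarrow> ('a \<Rightarrow> 'e \<Rightarrow> real) \<Rightarrow> 'a set \<Rightarrow> bool" where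
  "lcHs sc p A \<longleftrightarrow> Vector_Spaces.vector_space sc \<and> A \<noteq> {} \<and> (\<forall>a\<in>A. is_seminorm sc (p a)) \<and>
     directed_on p A UNIV \<and> (\<forall>x. x \<noteq> 0 \<longrightarrow> (\<exists>a\<in>A. p a x \<noteq> 0)) \<and> (\<exists>x::'e. x \<noteq> 0)"

definition dualsp :: "('k::real_normed_field \<Rightarrow> 'e::ab_group_add \<Rightarrow> 'e) \<Rightarrow> ('a \<Rightarrow> 'e \<Rightarrow> real) \<Rightarrow> 'a set \<Rightarrow> ('e \<Rightarrow> 'k) set" where
  "dualsp sc p A = {e'. Vector_Spaces.linear sc (*) e' \<and> continuous_map (semtop p A UNIV) euclidean e'}"

definition fsc :: "('k \<Rightarrow> 'f \<Rightarrow> 'f) \<Rightarrow> 'k \<Rightarrow> ('o \<Rightarrow> 'f) \<Rightarrow> ('o \<Rightarrow> 'f)" where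
  "fsc sc c f = (\<lambda>x. sc c (f x))"

definition lin_op :: "('k \<Rightarrow> 'f::ab_group_add \<Rightarrow> 'f) \<Rightarrow> ('o \<Rightarrow> 'f) set \<Rightarrow> 'w set \<Rightarrow> (('o \<Rightarrow> 'f) \<Rightarrow> 'w \<Rightarrow> 'f) \<Rightarrow> bool" where
  "lin_op sc D om T \<longleftrightarrow> (\<lambda>_. 0) \<in> D \<and> (\<forall>f\<in>D. \<forall>g\<in>D. \<forall>a b. fsc sc a f + fsc sc b g \<in> D \<and>
      (\<forall>x\<in>om. T (fsc sc a f + fsc sc b g) x = sc a (T f x) + sc b (T g x)))"

definition lin_fun_on :: "('k \<Rightarrow> 'v::plus \<Rightarrow> 'v) \<Rightarrow> ('k \<Rightarrow> 'u::plus \<Rightarrow> 'u) \<Rightarrow> 'v set \<Rightarrow> ('v \<Rightarrow> 'u) \<Rightarrow> bool" where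
  "lin_fun_on sc1 sc2 X phi \<longleftrightarrow> (\<forall>x\<in>X. \<forall>y\<in>X. \<forall>a b. phi (sc1 a x + sc1 b y) = sc2 a (phi x) + sc2 b (phi y))"

definition Wsp :: "'m set \<Rightarrow> 'm set \<Rightarrow> ('m \<Rightarrow> 'w set) \<Rightarrow> ('m \<Rightarrow> ('o \<Rightarrow> 'f) set) \<Rightarrow> ('m \<Rightarrow> ('o \<Rightarrow> 'f) \<Rightarrow> 'w \<Rightarrow> 'f::zero) \<Rightarrow> ('o \<Rightarrow> 'f) set" where
  "Wsp MM M0 om D T = {f. (\<forall>m\<in>MM. f \<in> D m) \<and> (\<forall>m\<in>M0. \<forall>x\<in>om m. T m f x = 0)}"

definition wvals :: "('f \<Rightarrow> real) \<Rightarrow> ('m \<Rightarrow> ('o \<Rightarrow> 'f) \<Rightarrow> 'w \<Rightarrow> 'f) \<Rightarrow> 'm set \<Rightarrow> ('m \<Rightarrow> 'o \<Rightarrow> real) \<Rightarrow> ('o \<Rightarrow> 'w) \<Rightarrow> ('o \<Rightarrow> 'f) \<Rightarrow> real set" where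
  "wvals pn T Ms w iota f = {pn (T m f (iota x)) * w m x | x m. m \<in> Ms}"

definition wsemi :: "('a \<Rightarrow> 'f \<Rightarrow> real) \<Rightarrow> ('m \<Rightarrow> ('o \<Rightarrow> 'f) \<Rightarrow> 'w \<Rightarrow> 'f) \<Rightarrow> ('l \<Rightarrow> 'm set) \<Rightarrow> ('j \<Rightarrow> 'l \<Rightarrow> 'm \<Rightarrow> 'o \<Rightarrow> real) \<Rightarrow> ('o \<Rightarrow> 'w) \<Rightarrow> 'j \<times> 'l \<times> 'a \<Rightarrow> ('o \<Rightarrow> 'f) \<Rightarrow> real" where
  "wsemi pn T Ml nu iota = (\<lambda>(j,l,a) f. Sup (insert 0 (wvals (pn a) T (Ml l) (nu j l) iota f)))"

definition FVsp :: "'m set \<Rightarrow> 'm set \<Rightarrow> ('m \<Rightarrow> 'w set) \<Rightarrow> ('m \<Rightarrow> ('o \<Rightarrow> 'f) set) \<Rightarrow> ('m \<Rightarrow> ('o \<Rightarrow> 'f) \<Rightarrow> 'w \<Rightarrow> 'f::zero) \<Rightarrow>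
     'j set \<Rightarrow> 'l set \<Rightarrow> ('l \<Rightarrow> 'm set) \<Rightarrow> ('j \<Rightarrow> 'l \<Rightarrow> 'm \<Rightarrow> 'o \<Rightarrow> real) \<Rightarrow> ('o \<Rightarrow> 'w) \<Rightarrow> 'a set \<Rightarrow> ('a \<Rightarrow> 'f \<Rightarrow> real) \<Rightarrow> ('o \<Rightarrow> 'f) set" where
  "FVsp MM M0 om D T J L Ml nu iota P pn = {f \<in> Wsp MM M0 om D T.
      \<forall>j\<in>J. \<forall>l\<in>L. \<forall>a\<in>P. bdd_above (wvals (pn a) T (Ml l) (nu j l) iota f)}"

definition abs_convex :: "('k::real_normed_field \<Rightarrow> 'v::plus \<Rightarrow> 'v) \<Rightarrow> 'v set \<Rightarrow> bool" where
  "abs_convex sc K \<longleftrightarrow> (\<forall>x\<in>K. \<forall>y\<in>K. \<forall>a b. norm a + norm b \<le> 1 \<longrightarrow> sc a x + sc b y \<in> K)"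

definition supK :: "'v set \<Rightarrow> ('v \<Rightarrow> 'k::real_normed_field) \<Rightarrow> real" where
  "supK K phi = Sup (insert 0 ((\<lambda>f. norm (phi f)) ` K))"

end

theory Submission
  imports Defs
begin

(* An element u of FV(Omega) eps E is continuous for the topology kappa of uniform convergence
   on the compact subsets of FV(Omega).  Compact sets are bounded for every weighted seminorm
   |.|_{j,l}, so the functionals nu_{j,l,m}(x) T_{m,x} form a kappa-bounded family, and T_{m,x}
   is kappa-null for m in M_0.  Applying u (resp. e o u) yields S(u) in FV(Omega,E) and
   e o S(u) in FV(Omega) for e in G, which by strength is the required element of FV(Omega)
   with the values e(R(S u)) on U.  For injectivity, if R f1 = R f2 then e o f1 - e o f2 lies
   in FV(Omega) and vanishes on the set of uniqueness U, so it is 0; as G is separating,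
   f1 = f2. *)

section \<open>Topologies generated by seminorms\<close>

lemma openin_semtop:
  "openin (semtop q I X) S \<longleftrightarrow> S \<subseteq> X \<and> (\<forall>x\<in>S. \<exists>F e. finite F \<and> F \<subseteq> I \<and> 0 < e \<and>
       {y\<in>X. \<forall>i\<in>F. q i (y - x) < e} \<subseteq> S)"
  unfolding semtop_def topology_inverse'[OF istopology_semtop] by (rule refl)

lemma topspace_semtop: "topspace (semtop q I X) = X"
proof -
  have "openin (semtop q I X) X"
    unfolding openin_semtop by (auto intro!: exI[of _ "{}"] exI[of _ 1])
  then show ?thesis
    using openin_subset by (fastforce simp: openin_semtop topspace_def)
qed

lemma openin_semtop_ball:
  assumes i: "i \<in> I" and c: "c \<in> X"
    and tri: "\<And>x y z. x \<in> X \<Longrightarrow> y \<in> X \<Longrightarrow> z \<in> X \<Longrightarrow> q i (z - x) \<le> q i (z - y) + q i (y - x)"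
  shows "openin (semtop q I X) {y \<in> X. q i (y - c) < r}"
  unfolding openin_semtop
proof (intro conjI ballI)
  fix y assume y: "y \<in> {y \<in> X. q i (y - c) < r}"
  have "z \<in> {y \<in> X. q i (y - c) < r}" if "z \<in> X" "q i (z - y) < r - q i (y - c)" for z
    using tri[OF c _ that(1), of y] y that by auto
  then show "\<exists>F e. finite F \<and> F \<subseteq> I \<and> 0 < e \<and>
      {z \<in> X. \<forall>i\<in>F. q i (z - y) < e} \<subseteq> {y \<in> X. q i (y - c) < r}"
    using y i by (intro exI[of _ "{i}"] exI[of _ "r - q i (y - c)"]) auto
qed auto

lemma compactin_semtop_bounded:
  assumes i: "i \<in> I" and c: "c \<in> X"
    and tri: "\<And>x y z. x \<in> X \<Longrightarrow> y \<in> X \<Longrightarrow> z \<in> X \<Longrightarrow> q i (z - x) \<le> q i (z - y) + q i (y - x)"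
    and K: "compactin (semtop q I X) K"
  shows "\<exists>B. \<forall>f\<in>K. q i (f - c) \<le> B"
proof -
  define ball where "ball n = {y \<in> X. q i (y - c) < real n}" for n :: nat
  have "K \<subseteq> X" using compactin_subset_topspace[OF K] by (simp add: topspace_semtop)
  then have "K \<subseteq> \<Union> (range ball)"
    using reals_Archimedean2 by (fastforce simp: ball_def)
  moreover have "openin (semtop q I X) U" if "U \<in> range ball" for U
    using that openin_semtop_ball[where q=q, OF i c tri] by (auto simp: ball_def)
  ultimately obtain F where F: "finite F" "F \<subseteq> range ball" "K \<subseteq> \<Union> F"
    using K unfolding compactin_def by meson
  then obtain N where N: "finite N" "F = ball ` N"
    using finite_subset_image by metis
  have "q i (f - c) \<le> (\<Sum>n\<in>N. real n)" if f: "f \<in> K" for f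
  proof -
    obtain n where "n \<in> N" "q i (f - c) < real n"
      using F N f by (auto simp: ball_def)
    then show ?thesis
      using member_le_sum[of n N real] N(1) by simp
  qed
  then show ?thesis by blast
qed

lemma continuous_map_semtop_nbhd:
  assumes "continuous_map (semtop q I X) Y w" "openin Y V" "c \<in> X" "w c \<in> V"
  shows "\<exists>F e. finite F \<and> F \<subseteq> I \<and> 0 < e \<and> (\<forall>y\<in>X. (\<forall>i\<in>F. q i (y - c) < e) \<longrightarrow> w y \<in> V)"
proof -
  have "openin (semtop q I X) {y \<in> topspace (semtop q I X). w y \<in> V}"
    by (rule openin_continuous_map_preimage[OF assms(1,2)])
  then have "\<forall>x\<in>{y \<in> X. w y \<in> V}. \<exists>F e. finite F \<and> F \<subseteq> I \<and> 0 < e \<and>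
      {y\<in>X. \<forall>i\<in>F. q i (y - x) < e} \<subseteq> {y \<in> X. w y \<in> V}"
    unfolding topspace_semtop openin_semtop by (rule conjunct2)
  then have "\<exists>F e. finite F \<and> F \<subseteq> I \<and> 0 < e \<and>
      {y\<in>X. \<forall>i\<in>F. q i (y - c) < e} \<subseteq> {y \<in> X. w y \<in> V}"
    using assms(3,4) by simp
  then obtain F e where "finite F" "F \<subseteq> I" "0 < e" "{y\<in>X. \<forall>i\<in>F. q i (y - c) < e} \<subseteq> {y \<in> X. w y \<in> V}"
    by blast
  then show ?thesis by (intro exI[of _ F] exI[of _ e]) auto
qed

section \<open>Uniform convergence on a family of sets\<close>

lemma supK_le: "0 \<le> B \<Longrightarrow> (\<And>f. f \<in> K \<Longrightarrow> norm (\<psi> f) \<le> B) \<Longrightarrow> supK K \<psi> \<le> B"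
  unfolding supK_def by (rule cSup_least) auto

lemma continuous_supK_vanishing:
  fixes w :: "('v \<Rightarrow> 'k::real_normed_field) \<Rightarrow> 'y"
  assumes cont: "continuous_map (semtop supK KK D) Y w" and opn: "openin Y {y. N y < 1}"
    and zero: "0 \<in> D" "N (w 0) < 1"
    and scale: "\<And>\<psi> c. \<psi> \<in> D \<Longrightarrow> fsc (*) c \<psi> \<in> D"
    and hom: "\<And>\<psi> c. \<psi> \<in> D \<Longrightarrow> N (w (fsc (*) c \<psi>)) = norm c * N (w \<psi>)"
    and \<phi>: "\<phi> \<in> D" "\<And>K f. K \<in> KK \<Longrightarrow> f \<in> K \<Longrightarrow> \<phi> f = 0"
  shows "N (w \<phi>) \<le> 0"
proof (rule ccontr)
  assume pos: "\<not> N (w \<phi>) \<le> 0"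
  obtain F e where F: "F \<subseteq> KK" "0 < e" and nbhd: "\<forall>\<psi>\<in>D. (\<forall>K\<in>F. supK K \<psi> < e) \<longrightarrow> N (w \<psi>) < 1"
    using continuous_map_semtop_nbhd[OF cont opn zero(1)] zero(2) by auto
  \<comment> \<open>Every multiple of \<phi> lies in every basic \<kappa>-neighbourhood of 0.\<close>
  define \<psi> where "\<psi> = fsc (*) (of_real (1 / N (w \<phi>))) \<phi>"
  have "supK K \<psi> \<le> 0" if "K \<in> F" for K
    using \<phi>(2) F(1) that by (intro supK_le) (auto simp: \<psi>_def fsc_def)
  then have "N (w \<psi>) < 1"
    using nbhd scale[OF \<phi>(1)] F(2) by (force simp: \<psi>_def)
  moreover have "N (w \<psi>) = 1"
    using hom[OF \<phi>(1)] pos by (simp add: \<psi>_def norm_divide)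
  ultimately show False by simp
qed

lemma continuous_supK_bounded:
  fixes w :: "('v \<Rightarrow> 'k::real_normed_field) \<Rightarrow> 'y"
  assumes cont: "continuous_map (semtop supK KK D) Y w" and opn: "openin Y {y. N y < 1}"
    and zero: "0 \<in> D" "N (w 0) < 1"
    and scale: "\<And>\<psi> c. \<psi> \<in> D \<Longrightarrow> fsc (*) c \<psi> \<in> D"
    and hom: "\<And>\<psi> c. \<psi> \<in> D \<Longrightarrow> N (w (fsc (*) c \<psi>)) = norm c * N (w \<psi>)"
    and \<phi>: "\<And>t. t \<in> Ts \<Longrightarrow> \<phi> t \<in> D" and \<nu>: "\<And>t. t \<in> Ts \<Longrightarrow> 0 \<le> \<nu> t"
    and bounded: "\<And>K. K \<in> KK \<Longrightarrow> \<exists>B. \<forall>t\<in>Ts. \<forall>f\<in>K. norm (\<phi> t f) * \<nu> t \<le> B"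
  shows "\<exists>C. \<forall>t\<in>Ts. N (w (\<phi> t)) * \<nu> t \<le> C"
proof -
  obtain F e where F: "finite F" "F \<subseteq> KK" "0 < e"
    and nbhd: "\<forall>\<psi>\<in>D. (\<forall>K\<in>F. supK K \<psi> < e) \<longrightarrow> N (w \<psi>) < 1"
    using continuous_map_semtop_nbhd[OF cont opn zero(1)] zero(2) by auto
  obtain BK where BK: "\<And>K t f. K \<in> F \<Longrightarrow> t \<in> Ts \<Longrightarrow> f \<in> K \<Longrightarrow> norm (\<phi> t f) * \<nu> t \<le> BK K"
    using bounded F(2) by (metis subsetD)
  define B where "B = (\<Sum>K\<in>F. \<bar>BK K\<bar>)"
  have B: "0 \<le> B" "\<And>K. K \<in> F \<Longrightarrow> BK K \<le> B"
  proof -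
    show "0 \<le> B" unfolding B_def by (simp add: sum_nonneg)
    fix K assume "K \<in> F"
    have "BK K \<le> \<bar>BK K\<bar>" by simp
    also have "\<dots> \<le> B"
      unfolding B_def using F(1) \<open>K \<in> F\<close> by (intro member_le_sum) auto
    finally show "BK K \<le> B" .
  qed
  define c where "c = e / (B + 1)"
  have c: "0 < c" "c * B < e"
    unfolding c_def using F(3) B(1) by (auto simp: field_simps)
  \<comment> \<open>The multiple c \<nu>(t) \<phi>(t) lies in the basic \<kappa>-neighbourhood on which N \<circ> w < 1.\<close>
  have "N (w (\<phi> t)) * \<nu> t \<le> 1 / c" if t: "t \<in> Ts" for t
  proof -
    define \<psi> where "\<psi> = fsc (*) (of_real (c * \<nu> t)) (\<phi> t)"
    have "supK K \<psi> \<le> c * B" if K: "K \<in> F" for K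
    proof (rule supK_le)
      fix f assume "f \<in> K"
      then have "norm (\<psi> f) = c * (norm (\<phi> t f) * \<nu> t)"
        using c(1) \<nu>[OF t] by (simp add: \<psi>_def fsc_def norm_mult abs_mult)
      also have "\<dots> \<le> c * B"
        using BK[OF K t \<open>f \<in> K\<close>] B(2)[OF K] c(1) by (simp add: mult_left_mono)
      finally show "norm (\<psi> f) \<le> c * B" .
    qed (use c B in simp)
    then have "N (w \<psi>) < 1"
      using nbhd scale[OF \<phi>[OF t]] c(2) by (force simp: \<psi>_def)
    moreover have "N (w \<psi>) = c * (N (w (\<phi> t)) * \<nu> t)"
      using hom[OF \<phi>[OF t]] c(1) \<nu>[OF t] by (simp add: \<psi>_def norm_mult)
    ultimately show ?thesis
      using c(1) by (simp add: field_simps)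
  qed
  then show ?thesis by blast
qed

section \<open>Linear functionals and locally convex spaces\<close>

lemma lin_fun_on_fsc_scale:
  assumes "lin_fun_on (fsc (*)) sc X u" "Vector_Spaces.vector_space sc" "\<psi> \<in> X"
  shows "u (fsc (*) c \<psi>) = sc c (u \<psi>)"
proof -
  have "fsc (*) c \<psi> = fsc (*) c \<psi> + fsc (*) 0 \<psi>"
    by (simp add: fun_eq_iff fsc_def)
  then show ?thesis
    using assms module.scale_zero_left[of sc] unfolding lin_fun_on_def module_iff_vector_space
    by (metis add_0_right)
qed

lemma lin_fun_on_fsc_zero:
  assumes "lin_fun_on (fsc (*)) sc X u" "Vector_Spaces.vector_space sc" "0 \<in> X"
  shows "u 0 = 0"
  using lin_fun_on_fsc_scale[OF assms, of 0] assms(2) module.scale_zero_left[of sc]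
  by (simp add: fsc_def zero_fun_def module_iff_vector_space)

lemma zero_in_continuous_dual:
  fixes X :: "('o \<Rightarrow> 'k::real_normed_field) set"
  shows "0 \<in> {\<phi>. lin_fun_on (fsc (*)) (*) X \<phi> \<and> continuous_map T euclidean \<phi>}"
  by (simp add: lin_fun_on_def zero_fun_def)

lemma scale_in_continuous_dual:
  fixes X :: "('o \<Rightarrow> 'k::real_normed_field) set"
  assumes "\<psi> \<in> {\<phi>. lin_fun_on (fsc (*)) (*) X \<phi> \<and> continuous_map T euclidean \<phi>}"
  shows "fsc (*) c \<psi> \<in> {\<phi>. lin_fun_on (fsc (*)) (*) X \<phi> \<and> continuous_map T euclidean \<phi>}"
proof -
  have "continuous_map T euclidean ((\<lambda>z. c * z) \<circ> \<psi>)"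
    using assms continuous_on_mult_left[OF continuous_on_id, of UNIV c]
    by (intro continuous_map_compose) auto
  moreover have "(\<lambda>z. c * z) \<circ> \<psi> = fsc (*) c \<psi>"
    by (simp add: fun_eq_iff fsc_def)
  ultimately show ?thesis
    using assms by (auto simp: lin_fun_on_def fsc_def algebra_simps)
qed

lemma lcHs_seminorm:
  assumes "lcHs sc p A" "a \<in> A"
  shows "0 \<le> p a y" "p a (sc c y) = norm c * p a y" "p a (y + z) \<le> p a y + p a z"
  using assms unfolding lcHs_def is_seminorm_def by blast+

lemma lcHs_seminorm_zero:
  assumes "lcHs sc p A" "a \<in> A"
  shows "p a 0 = 0"
  using lcHs_seminorm(2)[OF assms, of 0 0] assms(1) module.scale_zero_left[of sc]
  by (simp add: lcHs_def module_iff_vector_space)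

lemma lcHs_eq_zero:
  assumes "lcHs sc p A" "\<And>a. a \<in> A \<Longrightarrow> p a y \<le> 0"
  shows "y = 0"
  using assms lcHs_seminorm(1)[OF assms(1)] unfolding lcHs_def by (meson order_antisym)

lemma lcHs_openin_seminorm_ball:
  assumes "lcHs sc p A" "a \<in> A"
  shows "openin (semtop p A UNIV) {y. p a y < 1}"
proof -
  have "p a (z - x) \<le> p a (z - y) + p a (y - x)" for x y z
    using lcHs_seminorm(3)[OF assms, of "z - y" "y - x"] by simp
  then show ?thesis
    using openin_semtop_ball[of a A 0 UNIV p 1] assms(2) by simp
qed

lemma dualsp_module_hom: "e \<in> dualsp sc p A \<Longrightarrow> module_hom sc (*) e"
  unfolding dualsp_def Vector_Spaces.linear_def by blast

lemma dualsp_continuous: "e \<in> dualsp sc p A \<Longrightarrow> continuous_map (semtop p A UNIV) euclidean e"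
  unfolding dualsp_def by blast

section \<open>Weighted function spaces\<close>

lemma mem_FVsp_iff:
  "f \<in> FVsp MM M0 om D T J L Ml nu iota P pn \<longleftrightarrow>
     (\<forall>m\<in>MM. f \<in> D m) \<and> (\<forall>m\<in>M0. \<forall>x\<in>om m. T m f x = 0) \<and>
     (\<forall>j\<in>J. \<forall>l\<in>L. \<forall>a\<in>P. bdd_above {pn a (T m f (iota x)) * nu j l m x | x m. m \<in> Ml l})"
  unfolding FVsp_def Wsp_def wvals_def by auto

lemma wsemi_upper:
  assumes "bdd_above {pn a (T m f (iota x)) * nu j l m x | x m. m \<in> Ml l}" "m \<in> Ml l"
  shows "pn a (T m f (iota x)) * nu j l m x \<le> wsemi pn T Ml nu iota (j, l, a) f"
  unfolding wsemi_def wvals_def using assms by (auto intro!: cSup_upper)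

lemma wsemi_nonneg:
  assumes "bdd_above {pn a (T m f (iota x)) * nu j l m x | x m. m \<in> Ml l}"
  shows "0 \<le> wsemi pn T Ml nu iota (j, l, a) f"
  unfolding wsemi_def wvals_def using assms by (auto intro!: cSup_upper)

lemma wsemi_least:
  assumes "0 \<le> B" "\<And>m x. m \<in> Ml l \<Longrightarrow> pn a (T m f (iota x)) * nu j l m x \<le> B"
  shows "wsemi pn T Ml nu iota (j, l, a) f \<le> B"
  unfolding wsemi_def wvals_def using assms by (auto intro!: cSup_least)

locale weighted_space =
  fixes MM M0 :: "'m set" and om :: "'m \<Rightarrow> 'w set"
    and D :: "'m \<Rightarrow> ('o \<Rightarrow> 'k::real_normed_field) set" and T :: "'m \<Rightarrow> ('o \<Rightarrow> 'k) \<Rightarrow> 'w \<Rightarrow> 'k"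
    and J :: "'j set" and L :: "'l set" and Ml :: "'l \<Rightarrow> 'm set"
    and nu :: "'j \<Rightarrow> 'l \<Rightarrow> 'm \<Rightarrow> 'o \<Rightarrow> real" and iota :: "'o \<Rightarrow> 'w"
  assumes lin_op: "\<And>m. m \<in> MM \<Longrightarrow> lin_op (*) (D m) (om m) (T m)"
    and M0_subset: "M0 \<subseteq> MM" and Ml_subset: "\<And>l. l \<in> L \<Longrightarrow> Ml l \<subseteq> MM"
    and iota_in_om: "\<And>l m x. l \<in> L \<Longrightarrow> m \<in> Ml l \<Longrightarrow> iota x \<in> om m"
    and nu_nonneg: "\<And>j l m x. j \<in> J \<Longrightarrow> l \<in> L \<Longrightarrow> m \<in> Ml l \<Longrightarrow> 0 \<le> nu j l m x"
begin

abbreviation "FV \<equiv> FVsp MM M0 om D T J L Ml nu iota {()} (\<lambda>_. norm)"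

abbreviation "FV_seminorm j l \<equiv> wsemi (\<lambda>_. norm) T Ml nu iota (j, l, ())"

abbreviation "FV_top \<equiv> semtop (wsemi (\<lambda>_. norm) T Ml nu iota) (J \<times> L \<times> {()}) FV"

lemma T_lincomb:
  assumes "m \<in> MM" "f \<in> D m" "g \<in> D m"
  shows "fsc (*) a f + fsc (*) b g \<in> D m"
    and "y \<in> om m \<Longrightarrow> T m (fsc (*) a f + fsc (*) b g) y = a * T m f y + b * T m g y"
  using lin_op[OF assms(1)] assms(2,3) unfolding lin_op_def by blast+

lemma T_zero:
  assumes "m \<in> MM" "y \<in> om m"
  shows "0 \<in> D m" "T m 0 y = 0"
proof -
  show z: "0 \<in> D m"
    using lin_op[OF assms(1)] by (simp add: lin_op_def zero_fun_def)
  have "fsc (*) 0 0 + fsc (*) 0 0 = (0 :: 'o \<Rightarrow> 'k)"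
    by (simp add: fun_eq_iff fsc_def)
  then show "T m 0 y = 0"
    using T_lincomb(2)[OF assms(1) z z assms(2), of 0 0] by simp
qed

lemma T_diff:
  assumes "m \<in> MM" "f \<in> D m" "g \<in> D m" "y \<in> om m"
  shows "T m (f - g) y = T m f y - T m g y"
proof -
  have "f - g = fsc (*) 1 f + fsc (*) (-1) g"
    by (simp add: fun_eq_iff fsc_def)
  then show ?thesis
    using T_lincomb(2)[OF assms(1-3) assms(4), of 1 "-1"] by simp
qed

lemma norm_T_le_FV_seminorm:
  assumes "f \<in> FV" "j \<in> J" "l \<in> L" "m \<in> Ml l"
  shows "norm (T m f (iota x)) * nu j l m x \<le> FV_seminorm j l f"
  using assms by (intro wsemi_upper) (auto simp: mem_FVsp_iff)

lemma FV_seminorm_nonneg: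
  assumes "f \<in> FV" "j \<in> J" "l \<in> L"
  shows "0 \<le> FV_seminorm j l f"
  using assms by (intro wsemi_nonneg) (auto simp: mem_FVsp_iff)

lemma norm_T_lincomb_le:
  assumes f: "f \<in> FV" and g: "g \<in> FV" and jlm: "j \<in> J" "l \<in> L" "m \<in> Ml l"
  shows "norm (T m (fsc (*) a f + fsc (*) b g) (iota x)) * nu j l m x
    \<le> norm a * FV_seminorm j l f + norm b * FV_seminorm j l g"
proof -
  have m: "m \<in> MM" using Ml_subset jlm by blast
  have "norm (T m (fsc (*) a f + fsc (*) b g) (iota x)) * nu j l m x
      = norm (a * T m f (iota x) + b * T m g (iota x)) * nu j l m x"
    using T_lincomb(2)[OF m] f g m iota_in_om[OF jlm(2,3)] by (simp add: mem_FVsp_iff)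
  also have "\<dots> \<le> norm a * (norm (T m f (iota x)) * nu j l m x) + norm b * (norm (T m g (iota x)) * nu j l m x)"
    using mult_right_mono[OF norm_triangle_ineq[of "a * T m f (iota x)" "b * T m g (iota x)"] nu_nonneg[OF jlm]]
    by (simp add: norm_mult algebra_simps)
  also have "\<dots> \<le> norm a * FV_seminorm j l f + norm b * FV_seminorm j l g"
    using norm_T_le_FV_seminorm[OF f jlm] norm_T_le_FV_seminorm[OF g jlm]
    by (intro add_mono mult_left_mono) auto
  finally show ?thesis .
qed

lemma lincomb_mem_FV:
  assumes f: "f \<in> FV" and g: "g \<in> FV"
  shows "fsc (*) a f + fsc (*) b g \<in> FV"
  unfolding mem_FVsp_iff
proof (intro conjI ballI)
  show "fsc (*) a f + fsc (*) b g \<in> D m" if "m \<in> MM" for m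
    using T_lincomb(1)[OF that] f g that by (simp add: mem_FVsp_iff)
  show "T m (fsc (*) a f + fsc (*) b g) x = 0" if "m \<in> M0" "x \<in> om m" for m x
    using T_lincomb(2) f g M0_subset that by (auto simp: mem_FVsp_iff)
  show "bdd_above {norm (T m (fsc (*) a f + fsc (*) b g) (iota x)) * nu j l m x | x m. m \<in> Ml l}"
    if jl: "j \<in> J" "l \<in> L" for j l
  proof (rule bdd_aboveI)
    fix r assume "r \<in> {norm (T m (fsc (*) a f + fsc (*) b g) (iota x)) * nu j l m x | x m. m \<in> Ml l}"
    then show "r \<le> norm a * FV_seminorm j l f + norm b * FV_seminorm j l g"
      using norm_T_lincomb_le[OF f g jl] by blast
  qed
qed

lemma FV_seminorm_lincomb_le:
  assumes f: "f \<in> FV" and g: "g \<in> FV" and jl: "j \<in> J" "l \<in> L"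
  shows "FV_seminorm j l (fsc (*) a f + fsc (*) b g) \<le> norm a * FV_seminorm j l f + norm b * FV_seminorm j l g"
  using norm_T_lincomb_le[OF f g jl] FV_seminorm_nonneg[OF f jl] FV_seminorm_nonneg[OF g jl]
  by (intro wsemi_least) auto

lemma zero_mem_FV: "0 \<in> FV"
  unfolding mem_FVsp_iff
proof (intro conjI ballI)
  show "0 \<in> D m" if "m \<in> MM" for m
    using lin_op[OF that] by (simp add: lin_op_def zero_fun_def)
  show "T m 0 x = 0" if "m \<in> M0" "x \<in> om m" for m x
    using T_zero(2) M0_subset that by blast
  show "bdd_above {norm (T m 0 (iota x)) * nu j l m x | x m. m \<in> Ml l}" if "j \<in> J" "l \<in> L" for j l
  proof (rule bdd_aboveI)
    fix r assume "r \<in> {norm (T m 0 (iota x)) * nu j l m x | x m. m \<in> Ml l}"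
    then obtain x m where "m \<in> Ml l" "r = norm (T m 0 (iota x)) * nu j l m x" by blast
    then show "r \<le> 0"
      using T_zero(2)[of m "iota x"] Ml_subset[OF \<open>l \<in> L\<close>] iota_in_om[OF \<open>l \<in> L\<close>] by auto
  qed
qed

lemma diff_mem_FV:
  assumes "f \<in> FV" "g \<in> FV"
  shows "f - g \<in> FV"
proof -
  have "f - g = fsc (*) 1 f + fsc (*) (-1) g"
    by (simp add: fun_eq_iff fsc_def)
  then show ?thesis
    using lincomb_mem_FV[OF assms] by simp
qed

lemma FV_seminorm_triangle:
  assumes "f \<in> FV" "g \<in> FV" "h \<in> FV" "j \<in> J" "l \<in> L"
  shows "FV_seminorm j l (h - f) \<le> FV_seminorm j l (h - g) + FV_seminorm j l (g - f)"
proof -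
  have "h - f = fsc (*) 1 (h - g) + fsc (*) 1 (g - f)"
    by (simp add: fun_eq_iff fsc_def)
  then show ?thesis
    using FV_seminorm_lincomb_le[OF diff_mem_FV diff_mem_FV, of h g g f j l 1 1] assms by simp
qed

lemma compactin_FV_bounded:
  assumes K: "compactin FV_top K" and jl: "j \<in> J" "l \<in> L"
  shows "\<exists>B. \<forall>f\<in>K. \<forall>m\<in>Ml l. \<forall>x. norm (T m f (iota x)) * nu j l m x \<le> B"
proof -
  have "(j, l, ()) \<in> J \<times> L \<times> {()}" using jl by simp
  from compactin_semtop_bounded[OF this zero_mem_FV FV_seminorm_triangle[OF _ _ _ jl] K]
  obtain B where B: "\<forall>f\<in>K. FV_seminorm j l (f - 0) \<le> B" by blast
  have "K \<subseteq> FV"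
    using compactin_subset_topspace[OF K] by (simp add: topspace_semtop)
  have "norm (T m f (iota x)) * nu j l m x \<le> B" if f: "f \<in> K" and m: "m \<in> Ml l" for f m x
  proof -
    have "norm (T m f (iota x)) * nu j l m x \<le> FV_seminorm j l f"
      using norm_T_le_FV_seminorm[OF _ jl m] f \<open>K \<subseteq> FV\<close> by blast
    also have "\<dots> \<le> B" using B f by simp
    finally show ?thesis .
  qed
  then show ?thesis by blast
qed

lemma inj_on_restriction:
  fixes TE :: "'m \<Rightarrow> ('o \<Rightarrow> 'e::ab_group_add) \<Rightarrow> 'w \<Rightarrow> 'e" and G :: "('e \<Rightarrow> 'k) set"
  assumes U: "U \<subseteq> Sigma MM om"
    and uniq: "\<And>f. f \<in> FV \<Longrightarrow> (\<And>m x. (m, x) \<in> U \<Longrightarrow> T m f x = 0) \<Longrightarrow> f = 0"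
    and G_diff: "\<And>e y z. e \<in> G \<Longrightarrow> e (y - z) = e y - e z"
    and G_sep: "\<And>y. (\<And>e. e \<in> G \<Longrightarrow> e y = 0) \<Longrightarrow> y = 0"
    and F: "\<And>e f. e \<in> G \<Longrightarrow> f \<in> F \<Longrightarrow> e \<circ> f \<in> FV"
      "\<And>e f m x. e \<in> G \<Longrightarrow> f \<in> F \<Longrightarrow> (m, x) \<in> U \<Longrightarrow> T m (e \<circ> f) x = e (TE m f x)"
  shows "inj_on (\<lambda>f. restrict (\<lambda>(m, x). TE m f x) U) F"
proof (rule inj_onI, rule ext)
  fix f1 f2 y
  assume f: "f1 \<in> F" "f2 \<in> F" and eq: "restrict (\<lambda>(m, x). TE m f1 x) U = restrict (\<lambda>(m, x). TE m f2 x) U"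
  have "e (f1 y - f2 y) = 0" if e: "e \<in> G" for e
  proof -
    have "T m ((e \<circ> f1) - (e \<circ> f2)) x = 0" if mx: "(m, x) \<in> U" for m x
    proof -
      have "m \<in> MM" "x \<in> om m" using U mx by auto
      moreover have "TE m f1 x = TE m f2 x"
        using fun_cong[OF eq, of "(m, x)"] mx by simp
      ultimately show ?thesis
        using T_diff F[OF e f(1)] F[OF e f(2)] mx by (simp add: mem_FVsp_iff)
    qed
    then have "(e \<circ> f1) - (e \<circ> f2) = 0"
      using uniq diff_mem_FV F(1)[OF e] f by blast
    then have "((e \<circ> f1) - (e \<circ> f2)) y = 0" by simp
    then show ?thesis
      using G_diff[OF e] by simp
  qed
  then show "f1 y = f2 y"
    using G_sep by fastforce
qed

context
  fixes KK :: "('o \<Rightarrow> 'k) set set" and Dual :: "(('o \<Rightarrow> 'k) \<Rightarrow> 'k) set"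
  assumes KK_compact: "\<And>K. K \<in> KK \<Longrightarrow> K \<subseteq> FV \<and> compactin FV_top K"
    and zero_in_Dual: "0 \<in> Dual" and scale_in_Dual: "\<And>\<psi> c. \<psi> \<in> Dual \<Longrightarrow> fsc (*) c \<psi> \<in> Dual"
    and eval_in_Dual: "\<And>m x. m \<in> MM \<Longrightarrow> x \<in> om m \<Longrightarrow> (\<lambda>f. T m f x) \<in> Dual"
begin

lemma mem_FVsp_if_kappa_continuous:
  fixes w :: "(('o \<Rightarrow> 'k) \<Rightarrow> 'k) \<Rightarrow> 'f::zero" and pn :: "'a \<Rightarrow> 'f \<Rightarrow> real"
  assumes cont: "continuous_map (semtop supK KK Dual) Y w"
    and pn: "\<And>a. a \<in> P \<Longrightarrow> openin Y {y. pn a y < 1}" "\<And>a. a \<in> P \<Longrightarrow> pn a (w 0) = 0"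
      "\<And>a \<psi> c. a \<in> P \<Longrightarrow> \<psi> \<in> Dual \<Longrightarrow> pn a (w (fsc (*) c \<psi>)) = norm c * pn a (w \<psi>)"
    and pn_sep: "\<And>y. (\<And>a. a \<in> P \<Longrightarrow> pn a y \<le> 0) \<Longrightarrow> y = 0"
    and g: "\<And>m. m \<in> MM \<Longrightarrow> g \<in> DG m" "\<And>m x. m \<in> MM \<Longrightarrow> x \<in> om m \<Longrightarrow> TG m g x = w (\<lambda>f. T m f x)"
  shows "g \<in> FVsp MM M0 om DG TG J L Ml nu iota P pn"
  unfolding mem_FVsp_iff
proof (intro conjI ballI)
  show "g \<in> DG m" if "m \<in> MM" for m
    using g(1) that .
  show "TG m g x = 0" if m: "m \<in> M0" and x: "x \<in> om m" for m x
  proof -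
    have vanish: "T m f x = 0" if "K \<in> KK" "f \<in> K" for K f
      using KK_compact[OF that(1)] that(2) m x by (auto simp: mem_FVsp_iff)
    have "pn a (w (\<lambda>f. T m f x)) \<le> 0" if a: "a \<in> P" for a
    proof (rule continuous_supK_vanishing[where N="pn a" and \<phi>="\<lambda>f. T m f x",
          OF cont pn(1)[OF a] zero_in_Dual _ scale_in_Dual pn(3)[OF a]])
      show "pn a (w 0) < 1" using pn(2)[OF a] by simp
      show "(\<lambda>f. T m f x) \<in> Dual" using eval_in_Dual M0_subset m x by blast
    qed (use vanish in auto)
    then show ?thesis
      using pn_sep g(2) M0_subset m x by auto
  qed
  show "bdd_above {pn a (TG m g (iota x)) * nu j l m x | x m. m \<in> Ml l}"
    if jl: "j \<in> J" "l \<in> L" and a: "a \<in> P" for j l a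
  proof -
    have "\<exists>C. \<forall>t\<in>Ml l \<times> UNIV. pn a (w ((\<lambda>(m, x) f. T m f (iota x)) t)) * (\<lambda>(m, x). nu j l m x) t \<le> C"
    proof (rule continuous_supK_bounded[where N="pn a",
          OF cont pn(1)[OF a] zero_in_Dual _ scale_in_Dual pn(3)[OF a]])
      show "pn a (w 0) < 1" using pn(2)[OF a] by simp
      show "(\<lambda>(m, x) f. T m f (iota x)) t \<in> Dual" if "t \<in> Ml l \<times> UNIV" for t
        using that eval_in_Dual Ml_subset[OF jl(2)] iota_in_om[OF jl(2)] by auto
      show "0 \<le> (\<lambda>(m, x). nu j l m x) t" if "t \<in> Ml l \<times> UNIV" for t
        using that nu_nonneg[OF jl] by auto
      show "\<exists>B. \<forall>t\<in>Ml l \<times> UNIV. \<forall>f\<in>K. norm ((\<lambda>(m, x) f. T m f (iota x)) t f) * (\<lambda>(m, x). nu j l m x) t \<le> B"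
        if "K \<in> KK" for K
        using compactin_FV_bounded[OF conjunct2[OF KK_compact[OF that]] jl] by auto
    qed
    then obtain C where C: "\<And>m x. m \<in> Ml l \<Longrightarrow> pn a (w (\<lambda>f. T m f (iota x))) * nu j l m x \<le> C"
      by auto
    show ?thesis
    proof (rule bdd_aboveI)
      fix r assume "r \<in> {pn a (TG m g (iota x)) * nu j l m x | x m. m \<in> Ml l}"
      then obtain x m where "m \<in> Ml l" "r = pn a (TG m g (iota x)) * nu j l m x" by blast
      then show "r \<le> C"
        using C g(2) Ml_subset[OF jl(2)] iota_in_om[OF jl(2)] by auto
    qed
  qed
qed

lemma epsilon_section_mem_FVsp:
  fixes u :: "(('o \<Rightarrow> 'k) \<Rightarrow> 'k) \<Rightarrow> 'e::ab_group_add"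
  assumes E: "lcHs sc p A"
    and u: "lin_fun_on (fsc (*)) sc Dual u" "continuous_map (semtop supK KK Dual) (semtop p A UNIV) u"
    and g: "\<And>m. m \<in> MM \<Longrightarrow> g \<in> DE m" "\<And>m x. m \<in> MM \<Longrightarrow> x \<in> om m \<Longrightarrow> TE m g x = u (\<lambda>f. T m f x)"
  shows "g \<in> FVsp MM M0 om DE TE J L Ml nu iota A p"
proof (rule mem_FVsp_if_kappa_continuous[where P=A and pn=p, OF u(2)])
  have vs: "Vector_Spaces.vector_space sc"
    using E by (simp add: lcHs_def)
  show "p a (u (fsc (*) c \<psi>)) = norm c * p a (u \<psi>)" if "a \<in> A" "\<psi> \<in> Dual" for a \<psi> c
    using lin_fun_on_fsc_scale[OF u(1) vs that(2)] lcHs_seminorm(2)[OF E that(1)] by simp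
  show "p a (u 0) = 0" if "a \<in> A" for a
    using lin_fun_on_fsc_zero[OF u(1) vs zero_in_Dual] lcHs_seminorm_zero[OF E that] by simp
qed (use g lcHs_openin_seminorm_ball[OF E] lcHs_eq_zero[OF E] in auto)

lemma dual_comp_epsilon_section_mem_FV:
  fixes u :: "(('o \<Rightarrow> 'k) \<Rightarrow> 'k) \<Rightarrow> 'e::ab_group_add"
  assumes E: "lcHs sc p A"
    and u: "lin_fun_on (fsc (*)) sc Dual u" "continuous_map (semtop supK KK Dual) (semtop p A UNIV) u"
    and e: "e \<in> dualsp sc p A"
    and g: "\<And>m. m \<in> MM \<Longrightarrow> g \<in> D m" "\<And>m x. m \<in> MM \<Longrightarrow> x \<in> om m \<Longrightarrow> T m g x = e (u (\<lambda>f. T m f x))"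
  shows "g \<in> FV"
proof -
  have vs: "Vector_Spaces.vector_space sc"
    using E by (simp add: lcHs_def)
  note e_hom = dualsp_module_hom[OF e]
  have "continuous_map (semtop supK KK Dual) euclidean (e \<circ> u)"
    by (rule continuous_map_compose[OF u(2) dualsp_continuous[OF e]])
  then show ?thesis
  proof (rule mem_FVsp_if_kappa_continuous[where P="{()}" and pn="\<lambda>_. norm"])
    show "openin euclidean {y::'k. norm y < 1}"
      by (simp add: open_Collect_less continuous_on_norm_id)
    show "norm ((e \<circ> u) (fsc (*) c \<psi>)) = norm c * norm ((e \<circ> u) \<psi>)" if "\<psi> \<in> Dual" for \<psi> c
      using lin_fun_on_fsc_scale[OF u(1) vs that] module_hom.scale[OF e_hom] by (simp add: norm_mult)
    show "norm ((e \<circ> u) 0) = 0"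
      using lin_fun_on_fsc_zero[OF u(1) vs zero_in_Dual] module_hom.zero[OF e_hom] by simp
  qed (use g in auto)
qed

end

end

theorem proposition3p10:
  fixes sc :: "'k::real_normed_field \<Rightarrow> 'e::ab_group_add \<Rightarrow> 'e"
    and p :: "'a \<Rightarrow> 'e \<Rightarrow> real" and A :: "'a set"
    and J :: "'j set" and L :: "'l set" and Ml :: "'l \<Rightarrow> 'm set"
    and nu :: "'j \<Rightarrow> 'l \<Rightarrow> 'm \<Rightarrow> 'o \<Rightarrow> real"
    and M0 Mr :: "'m set" and om :: "'m \<Rightarrow> 'w set" and iota :: "'o \<Rightarrow> 'w"
    and DK :: "'m \<Rightarrow> ('o \<Rightarrow> 'k) set" and TK :: "'m \<Rightarrow> ('o \<Rightarrow> 'k) \<Rightarrow> 'w \<Rightarrow> 'k"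
    and DE :: "'m \<Rightarrow> ('o \<Rightarrow> 'e) set" and TE :: "'m \<Rightarrow> ('o \<Rightarrow> 'e) \<Rightarrow> 'w \<Rightarrow> 'e"
    and G :: "('e \<Rightarrow> 'k) set" and U :: "('m \<times> 'w) set"
    and Mtop MM :: "'m set" and Edual :: "('e \<Rightarrow> 'k) set"
    and FVK :: "('o \<Rightarrow> 'k) set" and FVE :: "('o \<Rightarrow> 'e) set" and topK :: "('o \<Rightarrow> 'k) topology"
    and FVdual :: "(('o \<Rightarrow> 'k) \<Rightarrow> 'k) set" and kappa :: "(('o \<Rightarrow> 'k) \<Rightarrow> 'k) topology"
    and epsprod :: "((('o \<Rightarrow> 'k) \<Rightarrow> 'k) \<Rightarrow> 'e) set" and S :: "((('o \<Rightarrow> 'k) \<Rightarrow> 'k) \<Rightarrow> 'e) \<Rightarrow> 'o \<Rightarrow> 'e"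
    and FVG :: "('m \<times> 'w \<Rightarrow> 'e) set" and R :: "('o \<Rightarrow> 'e) \<Rightarrow> 'm \<times> 'w \<Rightarrow> 'e"
  assumes "Mtop = \<Union> (Ml ` L)"
    and "MM = Mtop \<union> M0 \<union> Mr"
    and "Edual = dualsp sc p A"
    and "FVK = FVsp MM M0 om DK TK J L Ml nu iota {()} (\<lambda>_. norm)"
    and "FVE = FVsp MM M0 om DE TE J L Ml nu iota A p"
    and "topK = semtop (wsemi (\<lambda>_. norm) TK Ml nu iota) (J \<times> L \<times> {()}) FVK"
    and "FVdual = {phi. lin_fun_on (fsc (*)) (*) FVK phi \<and> continuous_map topK euclidean phi}"
    and "kappa = semtop supK {K. K \<subseteq> FVK \<and> abs_convex (fsc (*)) K \<and> compactin topK K} FVdual"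
    and "epsprod = {u. lin_fun_on (fsc (*)) sc FVdual u \<and> continuous_map kappa (semtop p A UNIV) u}"
    and "S = (\<lambda>u x. u (\<lambda>f. f x))"
    and "FVG = {f. f \<in> extensional U \<and> (\<forall>e\<in>G. \<exists>g\<in>FVK. \<forall>(m,x)\<in>U. TK m g x = e (f (m,x)))}"
    and "R = (\<lambda>f. restrict (\<lambda>(m,x). TE m f x) U)"
    and E: "lcHs sc p A"
    \<comment> \<open>weights\<close>
    and J_ne: "J \<noteq> {}" and L_ne: "L \<noteq> {}" and Ml_ne: "\<forall>l\<in>L. Ml l \<noteq> {}"
    and nu_nonneg: "\<forall>j\<in>J. \<forall>l\<in>L. \<forall>m\<in>Ml l. \<forall>x. 0 \<le> nu j l m x"
    and nu_pos: "\<forall>x. \<forall>l\<in>L. \<exists>j\<in>J. \<forall>m\<in>Ml l. 0 < nu j l m x"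
    \<comment> \<open>index sets pairwise disjoint\<close>
    and disj: "Mtop \<inter> M0 = {}" "Mtop \<inter> Mr = {}" "M0 \<inter> Mr = {}"
    \<comment> \<open>omega_m non-empty; Omega (embedded by iota) contained in omega_m for m in M_top\<close>
    and om_ne: "\<forall>m\<in>MM. om m \<noteq> {}" and iota_inj: "inj iota"
    and Om_sub: "\<forall>m\<in>Mtop. range iota \<subseteq> om m"
    \<comment> \<open>the operators are linear\<close>
    and linK: "\<forall>m\<in>MM. lin_op (*) (DK m) (om m) (TK m)"
    and linE: "\<forall>m\<in>MM. lin_op sc (DE m) (om m) (TE m)"
    \<comment> \<open>FV(Omega) and FV(Omega,E) are dom-spaces\<close>
    and domK_dir: "directed_on (wsemi (\<lambda>_. norm) TK Ml nu iota) (J \<times> L \<times> {()}) FVK"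
    and domK_delta: "\<forall>x. (\<lambda>f. f x) \<in> FVdual"
    and domE_dir: "directed_on (wsemi p TE Ml nu iota) (J \<times> L \<times> A) FVE"
    \<comment> \<open>the defining family is consistent\<close>
    and consistent: "\<forall>u\<in>epsprod. \<forall>m\<in>MM. \<forall>x\<in>om m.
        S u \<in> DE m \<and> (\<lambda>f. TK m f x) \<in> FVdual \<and> TE m (S u) x = u (\<lambda>f. TK m f x)"
    \<comment> \<open>the defining family is strong\<close>
    and strong: "\<forall>e\<in>Edual. \<forall>f\<in>FVE. \<forall>m\<in>MM.
        e \<circ> f \<in> DK m \<and> (\<forall>x\<in>om m. TK m (e \<circ> f) x = e (TE m f x))"
    \<comment> \<open>G is a separating linear subspace of E'\<close>
    and G_sub: "G \<subseteq> Edual" and G_zero: "(\<lambda>_. 0) \<in> G"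
    and G_lin: "\<forall>e1\<in>G. \<forall>e2\<in>G. \<forall>a b. fsc (*) a e1 + fsc (*) b e2 \<in> G"
    and G_sep: "\<forall>x. (\<forall>e\<in>G. e x = 0) \<longrightarrow> x = 0"
    \<comment> \<open>U is a set of uniqueness for FV(Omega)\<close>
    and U_sub: "U \<subseteq> Sigma MM om"
    and U_cont: "\<forall>(m,x)\<in>U. (\<lambda>f. TK m f x) \<in> FVdual"
    and U_uniq: "\<forall>f\<in>FVK. (\<forall>(m,x)\<in>U. TK m f x = 0) \<longrightarrow> f = (\<lambda>_. 0)"
  shows "(\<forall>f\<in>S ` epsprod. R f \<in> FVG) \<and> inj_on R (S ` epsprod)"
proof -
  interpret weighted_space MM M0 om DK TK J L Ml nu iota
    by unfold_locales (use linK nu_nonneg Om_sub assms(1,2) in \<open>auto simp: image_subset_iff\<close>)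
  define KK where "KK = {K. K \<subseteq> FVK \<and> abs_convex (fsc (*)) K \<and> compactin topK K}"
  have KK: "K \<subseteq> FV \<and> compactin FV_top K" if "K \<in> KK" for K
    using that by (simp add: KK_def assms(4,6))
  have Dual: "0 \<in> FVdual" "\<And>\<psi> c. \<psi> \<in> FVdual \<Longrightarrow> fsc (*) c \<psi> \<in> FVdual"
    unfolding assms(7) by (rule zero_in_continuous_dual, erule scale_in_continuous_dual)
  have eps: "S u \<in> FVE \<and> (\<forall>e\<in>G. e \<circ> S u \<in> FVK)" if u: "u \<in> epsprod" for u
  proof -
    have ul: "lin_fun_on (fsc (*)) sc FVdual u"
      and uc: "continuous_map (semtop supK KK FVdual) (semtop p A UNIV) u"
      using u by (simp_all add: assms(8,9) KK_def)
    have ev: "(\<lambda>f. TK m f x) \<in> FVdual" "S u \<in> DE m" "TE m (S u) x = u (\<lambda>f. TK m f x)"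
      if "m \<in> MM" "x \<in> om m" for m x
      using consistent u that by blast+
    have SuE: "S u \<in> FVE"
      unfolding assms(5) using ev(2,3) om_ne
      by (intro epsilon_section_mem_FVsp[OF KK Dual ev(1) E ul uc]) blast+
    have "e \<circ> S u \<in> FVK" if "e \<in> G" for e
    proof -
      have "e \<in> dualsp sc p A" using G_sub that assms(3) by blast
      then show ?thesis
        unfolding assms(4) using strong SuE ev(3) assms(3)
        by (intro dual_comp_epsilon_section_mem_FV[OF KK Dual ev(1) E ul uc]) auto
    qed
    with SuE show ?thesis by blast
  qed
  have strong_U: "TK m (e \<circ> f) x = e (TE m f x)"
    if "e \<in> G" "f \<in> S ` epsprod" "(m, x) \<in> U" for e f m x
  proof -
    have "e \<in> Edual" "f \<in> FVE" "m \<in> MM" "x \<in> om m"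
      using that G_sub U_sub eps by auto
    then show ?thesis using strong by blast
  qed
  show ?thesis
  proof
    show "\<forall>f\<in>S ` epsprod. R f \<in> FVG"
    proof
      fix f assume f: "f \<in> S ` epsprod"
      have "\<exists>g\<in>FVK. \<forall>(m, x)\<in>U. TK m g x = e (R f (m, x))" if "e \<in> G" for e
        using eps f that strong_U by (intro bexI[of _ "e \<circ> f"]) (auto simp: assms(12))
      then show "R f \<in> FVG" by (simp add: assms(11,12))
    qed
    show "inj_on R (S ` epsprod)"
      unfolding assms(12)
    proof (rule inj_on_restriction[OF U_sub])
      show "f = 0" if "f \<in> FV" "\<And>m x. (m, x) \<in> U \<Longrightarrow> TK m f x = 0" for f
        using U_uniq that assms(4) by (auto simp: zero_fun_def)
      show "e (y - z) = e y - e z" if "e \<in> G" for e y z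
        using G_sub that assms(3) dualsp_module_hom module_hom.diff by blast
    qed (use G_sep eps strong_U assms(4) in auto)
  qed
qed

end
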